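(* Let $\lambda$ be a nonzero real number and $n$ a positive integer. Then, as polynomials in $x$, $$\phi_{n+1,\lambda}(x)=x\phi_{n,\lambda}(x)+\Big(x\frac{d}{dx}-n\lambda\Big)\phi_{n,\lambda}(x)=x\sum_{k=0}^{n}\binom{n}{k}(1-\lambda)_{n-k,\lambda}\,\phi_{k,\lambda}(x).$$
   Context: For real $y$ and integer $k\ge0$: $(y)_{0,\lambda}=1$, $(y)_{k,\lambda}=y(y-\lambda)\cdots(y-(k-1)\lambda)$. The degenerate exponential is $e_\lambda(t)=\sum_{k\ge0}(1)_{k,\lambda}t^k/k!=(1+\lambda t)^{1/\lambda}$. The degenerate Bell polynomials $\phi_{n,\lambda}(x)$ are defined by $e^{x(e_\lambda(t)-1)}=\sum_{n\ge0}\phi_{n,\lambda}(x)\frac{t^n}{n!}$. *)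

theory Defs
  imports "HOL-Analysis.Analysis" "HOL-Computational_Algebra.Formal_Power_Series"
begin

definition deg_fall :: "real \<Rightarrow> nat \<Rightarrow> real \<Rightarrow> real" where
  "deg_fall y k l = (\<Prod>i<k. y - of_nat i * l)"

definition deg_exp_fps :: "real \<Rightarrow> real fps" where
  "deg_exp_fps l = Abs_fps (\<lambda>k. deg_fall 1 k l / fact k)"

definition deg_bell :: "nat \<Rightarrow> real \<Rightarrow> real \<Rightarrow> real" where
  "deg_bell n l x = fact n * fps_nth (fps_exp 1 oo (fps_const x * (deg_exp_fps l - 1))) n"

end

theory Submission
  imports Defs
begin

(* With E = e_lambda(t), F = exp(x (E - 1)) generates the phi_{n,lambda}(x).  The binomial
   identity is the coefficient of t^n in the chain rule F' = x F E', where
   E' = sum_m (1 - lambda)_{m,lambda} t^m / m!.  For the differential identity expand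
   phi_{n,lambda}(x) = sum_k S(n, k) x^k in the degenerate Stirling numbers
   S(n, k) = n!/k! [t^n] (E - 1)^k.  The ODE (1 + lambda t) E' = E gives
   (1 + lambda t) ((E - 1)^(k+1))' = (k + 1) ((E - 1)^(k+1) + (E - 1)^k), that is the recurrence
   S(n+1, k+1) = S(n, k) + (k + 1 - n lambda) S(n, k+1), which is the differential identity
   read off coefficientwise in x.  Neither identity needs lambda ~= 0 or n >= 1. *)

lemma deg_exp_fps_nth [simp]: "fps_nth (deg_exp_fps l) k = deg_fall 1 k l / fact k"
  by (simp add: deg_exp_fps_def)

lemma deg_fall_Suc: "deg_fall y (Suc k) l = deg_fall y k l * (y - of_nat k * l)"
  by (simp add: deg_fall_def)

lemma deg_fall_Suc_shift: "deg_fall y (Suc k) l = y * deg_fall (y - l) k l"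
  unfolding deg_fall_def by (subst prod.lessThan_Suc_shift) (simp add: algebra_simps)

lemma fps_deriv_deg_exp_fps_nth: "fps_nth (fps_deriv (deg_exp_fps l)) k = deg_fall (1 - l) k l / fact k"
  by (simp add: deg_fall_Suc_shift del: of_nat_Suc)

lemma fps_one_plus_const_X_mult_nth:
  fixes f :: "'a::comm_ring_1 fps"
  shows "fps_nth ((1 + fps_const c * fps_X) * f) n = fps_nth f n + (if n = 0 then 0 else c * fps_nth f (n - 1))"
proof -
  have "(1 + fps_const c * fps_X) * f = f + fps_const c * (fps_X * f)"
    by (simp add: algebra_simps)
  then show ?thesis
    by (simp only: fps_add_nth fps_mult_left_const_nth fps_X_mult_nth) simp
qed

lemma deg_exp_fps_ode: "(1 + fps_const l * fps_X) * fps_deriv (deg_exp_fps l) = deg_exp_fps l"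
proof (rule fps_ext)
  fix n
  show "fps_nth ((1 + fps_const l * fps_X) * fps_deriv (deg_exp_fps l)) n = fps_nth (deg_exp_fps l) n"
  proof (cases n)
    case 0
    then show ?thesis by (simp add: fps_one_plus_const_X_mult_nth deg_fall_def)
  next
    case (Suc m)
    have "deg_fall 1 n l * (1 - of_nat n * l) / fact n + l * (deg_fall 1 n l * of_nat n / fact n)
        = deg_fall 1 n l / fact n"
      by (simp add: field_simps)
    then show ?thesis
      using Suc by (simp add: fps_one_plus_const_X_mult_nth deg_fall_Suc field_simps del: of_nat_Suc)
  qed
qed

lemma deg_exp_minus_one_power_ode:
  "(1 + fps_const l * fps_X) * fps_deriv ((deg_exp_fps l - 1) ^ Suc k)
     = fps_const (of_nat (Suc k)) * ((deg_exp_fps l - 1) ^ Suc k + (deg_exp_fps l - 1) ^ k)"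
proof -
  let ?D = "deg_exp_fps l - 1"
  have "(1 + fps_const l * fps_X) * fps_deriv (?D ^ Suc k)
      = fps_const (of_nat (Suc k)) * ?D ^ k * ((1 + fps_const l * fps_X) * fps_deriv (deg_exp_fps l))"
    by (simp only: fps_deriv_power' fps_deriv_sub fps_deriv_1 diff_zero diff_Suc_1 fps_of_nat mult_ac)
  also have "\<dots> = fps_const (of_nat (Suc k)) * (?D ^ Suc k + ?D ^ k)"
    unfolding deg_exp_fps_ode by (simp add: algebra_simps)
  finally show ?thesis .
qed

definition deg_stirling2 :: "nat \<Rightarrow> nat \<Rightarrow> real \<Rightarrow> real" where
  "deg_stirling2 n k l = fact n / fact k * fps_nth ((deg_exp_fps l - 1) ^ k) n"

lemma deg_stirling2_eq_0: "n < k \<Longrightarrow> deg_stirling2 n k l = 0"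
proof -
  assume "n < k"
  have "fps_nth (deg_exp_fps l - 1) 1 = 1"
    by (simp add: deg_fall_def)
  then have "deg_exp_fps l - 1 \<noteq> 0"
    by (metis fps_zero_nth zero_neq_one)
  then have "1 \<le> subdegree (deg_exp_fps l - 1)"
    by (intro subdegree_geI) (auto simp: deg_fall_def)
  with \<open>n < k\<close> show ?thesis
    by (simp add: deg_stirling2_def fps_pow_nth_below_subdegree less_le_trans)
qed

lemma deg_stirling2_Suc_0 [simp]: "deg_stirling2 (Suc n) 0 l = 0"
  by (simp add: deg_stirling2_def)

lemma deg_stirling2_Suc_Suc:
  "deg_stirling2 (Suc n) (Suc k) l
     = deg_stirling2 n k l + (of_nat (Suc k) - of_nat n * l) * deg_stirling2 n (Suc k) l"
proof -
  let ?D = "deg_exp_fps l - 1"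
  have "fps_nth ((1 + fps_const l * fps_X) * fps_deriv (?D ^ Suc k)) n
      = of_nat (Suc k) * (fps_nth (?D ^ Suc k) n + fps_nth (?D ^ k) n)"
    unfolding deg_exp_minus_one_power_ode fps_mult_left_const_nth by simp
  then have "of_nat (Suc n) * fps_nth (?D ^ Suc k) (Suc n)
      = of_nat (Suc k) * (fps_nth (?D ^ Suc k) n + fps_nth (?D ^ k) n) - l * of_nat n * fps_nth (?D ^ Suc k) n"
    unfolding fps_one_plus_const_X_mult_nth by (cases n) (simp_all del: power_Suc)
  then have "deg_stirling2 (Suc n) (Suc k) l
      = fact n / fact (Suc k) * (of_nat (Suc k) * (fps_nth (?D ^ Suc k) n + fps_nth (?D ^ k) n)
          - l * of_nat n * fps_nth (?D ^ Suc k) n)"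
    unfolding deg_stirling2_def by (simp del: power_Suc of_nat_Suc fact_Suc add: fact_Suc[of n])
  then show ?thesis
    unfolding deg_stirling2_def by (simp del: power_Suc of_nat_Suc add: fact_Suc[of k] field_simps)
qed

lemma deg_bell_eq_sum_deg_stirling2: "deg_bell n l x = (\<Sum>k=0..n. deg_stirling2 n k l * x ^ k)"
  by (simp add: deg_bell_def deg_stirling2_def fps_compose_nth power_mult_distrib fps_const_power
      sum_distrib_left mult_ac)

lemma mult_deriv_sum_powers:
  fixes c :: "nat \<Rightarrow> real"
  shows "x * deriv (\<lambda>y. \<Sum>k=0..n. c k * y ^ k) x = (\<Sum>k=0..n. of_nat k * c k * x ^ k)"
proof -
  have "((\<lambda>y. \<Sum>k=0..n. c k * y ^ k) has_field_derivative (\<Sum>k=0..n. c k * (of_nat k * x ^ (k - 1)))) (at x)"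
    by (auto intro!: derivative_eq_intros sum.cong simp: mult_ac)
  then have "x * deriv (\<lambda>y. \<Sum>k=0..n. c k * y ^ k) x = (\<Sum>k=0..n. c k * (of_nat k * (x * x ^ (k - 1))))"
    by (simp add: DERIV_imp_deriv sum_distrib_left mult_ac)
  also have "\<dots> = (\<Sum>k=0..n. of_nat k * c k * x ^ k)"
    by (intro sum.cong refl) (simp add: power_eq_if)
  finally show ?thesis .
qed

lemma deg_bell_Suc_eq_deriv:
  "deg_bell (n+1) l x = x * deg_bell n l x + (x * deriv (\<lambda>y. deg_bell n l y) x - real n * l * deg_bell n l x)"
proof -
  define g where "g k = (of_nat k - of_nat n * l) * deg_stirling2 n k l * x ^ k" for k
  \<comment> \<open>for \<open>n = 0\<close> the factor \<open>n l\<close> vanishes, otherwise \<open>S(n, 0) = 0\<close>\<close>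
  have "g 0 = 0"
    by (cases n) (simp_all add: g_def)
  moreover have "g (Suc n) = 0"
    by (simp add: g_def deg_stirling2_eq_0)
  ultimately have shift: "(\<Sum>k=0..n. g (Suc k)) = (\<Sum>k=0..n. g k)"
    using sum.atLeast0_atMost_Suc_shift[of g n] sum.atLeast0_atMost_Suc[of g n] by simp
  have "deg_bell (n+1) l x = (\<Sum>k=0..n. deg_stirling2 (Suc n) (Suc k) l * x ^ Suc k)"
    unfolding deg_bell_eq_sum_deg_stirling2 Suc_eq_plus1[symmetric]
    by (subst sum.atLeast0_atMost_Suc_shift) simp
  also have "\<dots> = x * deg_bell n l x + (\<Sum>k=0..n. g (Suc k))"
    by (simp add: deg_bell_eq_sum_deg_stirling2 deg_stirling2_Suc_Suc g_def sum_distrib_left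
        sum.distrib[symmetric] algebra_simps)
  also have "(\<Sum>k=0..n. g (Suc k)) = x * deriv (\<lambda>y. deg_bell n l y) x - real n * l * deg_bell n l x"
    unfolding shift deg_bell_eq_sum_deg_stirling2 mult_deriv_sum_powers
    by (simp add: g_def sum_distrib_left sum_subtractf[symmetric] algebra_simps)
  finally show ?thesis .
qed

lemma fact_nth_fps_exp_compose_Suc:
  fixes G :: "'a::field_char_0 fps"
  assumes "fps_nth G 0 = 0"
  shows "fact (Suc n) * fps_nth (fps_exp 1 oo G) (Suc n)
    = (\<Sum>k=0..n. of_nat (n choose k) * (fact k * fps_nth (fps_exp 1 oo G) k)
                   * (fact (n - k) * fps_nth (fps_deriv G) (n - k)))"
proof -
  let ?F = "fps_exp 1 oo G"
  have "fps_deriv ?F = ?F * fps_deriv G"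
    using fps_compose_deriv[OF assms] by simp
  then have "of_nat (Suc n) * fps_nth ?F (Suc n) = (\<Sum>k=0..n. fps_nth ?F k * fps_nth (fps_deriv G) (n - k))"
    by (metis fps_deriv_nth fps_mult_nth Suc_eq_plus1)
  then have "fact (Suc n) * fps_nth ?F (Suc n)
      = (\<Sum>k=0..n. fact n * fps_nth ?F k * fps_nth (fps_deriv G) (n - k))"
    by (simp add: sum_distrib_left mult_ac del: of_nat_Suc)
  also have "\<dots> = (\<Sum>k=0..n. of_nat (n choose k) * (fact k * fps_nth ?F k)
                   * (fact (n - k) * fps_nth (fps_deriv G) (n - k)))"
    by (intro sum.cong refl) (simp add: binomial_fact)
  finally show ?thesis .
qed

lemma deg_bell_Suc_eq_binomial_sum:
  "deg_bell (n+1) l x = x * (\<Sum>k=0..n. real (n choose k) * deg_fall (1 - l) (n - k) l * deg_bell k l x)"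
proof -
  let ?G = "fps_const x * (deg_exp_fps l - 1)"
  have "fps_nth ?G 0 = 0"
    by (simp add: deg_fall_def)
  have bell: "deg_bell k l x = fact k * fps_nth (fps_exp 1 oo ?G) k" for k
    by (simp add: deg_bell_def)
  have "fact m * fps_nth (fps_deriv ?G) m = x * deg_fall (1 - l) m l" for m
    using fps_deriv_deg_exp_fps_nth[of l m] by simp
  with fact_nth_fps_exp_compose_Suc[OF \<open>fps_nth ?G 0 = 0\<close>, of n] show ?thesis
    by (simp only: bell Suc_eq_plus1) (simp add: sum_distrib_left mult_ac)
qed

theorem theorem11:
  fixes l :: real and n :: nat
  assumes "l \<noteq> 0" and "n \<ge> 1"
  shows "\<forall>x::real.
     deg_bell (n+1) l x = x * deg_bell n l x + (x * deriv (\<lambda>y. deg_bell n l y) x - real n * l * deg_bell n l x)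
   \<and> x * deg_bell n l x + (x * deriv (\<lambda>y. deg_bell n l y) x - real n * l * deg_bell n l x)
       = x * (\<Sum>k=0..n. real (n choose k) * deg_fall (1 - l) (n - k) l * deg_bell k l x)"
  using deg_bell_Suc_eq_deriv deg_bell_Suc_eq_binomial_sum by metis

end
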